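(* Let $G=(V,w)$ be a weighted graph and let $Z\in\mathcal{M}(G)$ be a crossless non-star minimum cut with shores $X_0$ and $X_1=V\setminus X_0$. For $b\in\{0,1\}$ let $\mathcal{M}_b=\{S\in\mathcal{M}(G): S\subseteq Z\cup E(X_b)\}$, and let $\{G_0,G_1\}=\mathrm{sep}(G,Z)$. Then for each $b\in\{0,1\}$, $\dim\,\mathrm{span}\{\chi(S): S\in\mathcal{M}_b\}=\mathrm{cdim}(G_b)$.
   Context: A weighted graph $G=(V,w)$ has nonnegative weights on unordered pairs of distinct vertices; its edge set is $E=\{e:w(e)>0\}$. For $X\subseteq V$, $E(X)$ is the set of edges with both endpoints in $X$. For $\emptyset\ne X\subsetneq V$, $\Delta(X)$ is the set of edges with exactly one endpoint in $X$ (a cut with shores $X$, $V\setminus X$). A cut is a star cut if one shore is a single vertex, otherwise non-star. $\mathcal{M}(G)$ is the set of minimum-weight cuts; $\chi(S)$ is the characteristic vector of $S$ indexed by the edges of the graph in question; $\mathrm{cdim}(G)=\dim\,\mathrm{span}\{\chi(S):S\in\mathcal{M}(G)\}$. Sets $X,Y$ cross if $X\cap Y$, $X\setminus Y$, $Y\setminus X$, $V\setminus(X\cup Y)$ are all nonempty; cuts cross if their shores cross. A mincut is crossless if no other mincut crosses it. The separation $\mathrm{sep}(G,Z)$ along a cut $Z$ with shores $X_0,X_1$ is the pair of graphs $G_b=(X_b\cup\{v_{1-b}\},w_b)$, $b\in\{0,1\}$, with new vertices $v_0,v_1$, where $w_b(\{x,y\})=w(\{x,y\})$ for $x,y\in X_b$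 and $w_b(\{x,v_{1-b}\})=\sum_{y\in X_{1-b}}w(\{x,y\})$ for $x\in X_b$. *)

theory Defs
  imports "HOL-Analysis.Analysis" "HOL-Library.Function_Algebras"
begin

definition weighted_graph :: "'v set \<Rightarrow> ('v set \<Rightarrow> real) \<Rightarrow> bool" where
  "weighted_graph V w \<longleftrightarrow> finite V \<and> (\<forall>x\<in>V. \<forall>y\<in>V. x \<noteq> y \<longrightarrow> w {x, y} \<ge> 0)"

definition edges :: "'v set \<Rightarrow> ('v set \<Rightarrow> real) \<Rightarrow> 'v set set" where
  "edges V w = {e. \<exists>x\<in>V. \<exists>y\<in>V. x \<noteq> y \<and> e = {x, y} \<and> w e > 0}"

definition inner_edges :: "'v set \<Rightarrow> ('v set \<Rightarrow> real) \<Rightarrow> 'v set \<Rightarrow> 'v set set" where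
  "inner_edges V w X = {e \<in> edges V w. e \<subseteq> X}"

definition delta :: "'v set \<Rightarrow> ('v set \<Rightarrow> real) \<Rightarrow> 'v set \<Rightarrow> 'v set set" where
  "delta V w X = {e \<in> edges V w. card (e \<inter> X) = 1}"

definition is_shore :: "'v set \<Rightarrow> 'v set \<Rightarrow> bool" where
  "is_shore V X \<longleftrightarrow> X \<noteq> {} \<and> X \<subset> V"

definition cuts :: "'v set \<Rightarrow> ('v set \<Rightarrow> real) \<Rightarrow> 'v set set set" where
  "cuts V w = {delta V w X | X. is_shore V X}"

definition cut_weight :: "('v set \<Rightarrow> real) \<Rightarrow> 'v set set \<Rightarrow> real" where
  "cut_weight w S = (\<Sum>e\<in>S. w e)"

definition mincuts :: "'v set \<Rightarrow> ('v set \<Rightarrow> real) \<Rightarrow> 'v set set set" where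
  "mincuts V w = {S \<in> cuts V w. \<forall>T \<in> cuts V w. cut_weight w S \<le> cut_weight w T}"

definition crosses :: "'v set \<Rightarrow> 'v set \<Rightarrow> 'v set \<Rightarrow> bool" where
  "crosses V X Y \<longleftrightarrow> X \<inter> Y \<noteq> {} \<and> X - Y \<noteq> {} \<and> Y - X \<noteq> {} \<and> V - (X \<union> Y) \<noteq> {}"

text \<open>The mincut with shore X is crossless: no other mincut (as an edge set) has a
  shore crossing X (crossing of X or of V - X is the same notion).\<close>
definition crossless :: "'v set \<Rightarrow> ('v set \<Rightarrow> real) \<Rightarrow> 'v set \<Rightarrow> bool" where
  "crossless V w X \<longleftrightarrow> (\<forall>Y. is_shore V Y \<and> delta V w Y \<in> mincuts V w \<and> delta V w Y \<noteq> delta V w X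
      \<longrightarrow> \<not> crosses V X Y)"

definition nonstar :: "'v set \<Rightarrow> 'v set \<Rightarrow> bool" where
  "nonstar V X \<longleftrightarrow> card X \<ge> 2 \<and> card (V - X) \<ge> 2"

text \<open>Characteristic vector of an edge set (as a real function on pairs; it vanishes
  outside the edge set of the graph since S is a set of edges).\<close>
definition chi :: "'v set set \<Rightarrow> 'v set \<Rightarrow> real" where
  "chi S = (\<lambda>e. if e \<in> S then 1 else 0)"

definition dimspan :: "('b \<Rightarrow> real) set \<Rightarrow> nat" where
  "dimspan A = vector_space.dim (\<lambda>(c::real) f x. c * f x) A"

definition cdim :: "'v set \<Rightarrow> ('v set \<Rightarrow> real) \<Rightarrow> nat" where
  "cdim V w = dimspan (chi ` mincuts V w)"

text \<open>Separation along the cut with shore X_b (other shore X_{1-b} = V - X_b):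
  the graph G_b has vertices Some ` X_b plus a new vertex None (standing for v_{1-b}).\<close>
definition sep_V :: "'v set \<Rightarrow> 'v option set" where
  "sep_V Xb = Some ` Xb \<union> {None}"

definition sep_w :: "'v set \<Rightarrow> ('v set \<Rightarrow> real) \<Rightarrow> 'v option set \<Rightarrow> real" where
  "sep_w Xother w e = (if None \<in> e then (\<Sum>y\<in>Xother. w (insert y (Some -` e)))
                       else w (Some -` e))"

end

theory Submission
  imports Defs
begin

(* A mincut S \<subseteq> Z \<union> E(X) has a shore Y that does not cross X (Z is crossless), so up to
   complementation Y \<subseteq> X or Y \<subseteq> V - X. In the second case Y has no edges to the rest of
   V - X, so w(Z) = w(\<Delta> Y) + w(\<Delta>((V - X) - Y)) \<ge> 2 w(Z), whence every mincut is empty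
   and S = Z. Thus the mincuts of G inside Z \<union> E(X) are exactly the \<Delta>(Y) with
   \<emptyset> \<noteq> Y \<subseteq> X that are mincuts. The cuts of the separated graph are the \<Delta>(Y) for the same
   shores Y, with unchanged weights, so its mincuts are indexed by the same Y. Finally, two
   linear maps relabelling edges through the contraction of V - X carry the characteristic
   vectors of the two families onto each other, so their spans have the same dimension. *)

section \<open>Cuts and their weights\<close>

lemma weighted_graph_finite: "weighted_graph V w \<Longrightarrow> finite V"
  unfolding weighted_graph_def by blast

lemma weighted_graph_nonneg:
  "weighted_graph V w \<Longrightarrow> x \<in> V \<Longrightarrow> y \<in> V \<Longrightarrow> x \<noteq> y \<Longrightarrow> 0 \<le> w {x, y}"
  unfolding weighted_graph_def by blast

lemma edgesE:
  assumes "e \<in> edges V w"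
  obtains x y where "x \<in> V" "y \<in> V" "x \<noteq> y" "e = {x, y}" "0 < w e"
  using assms unfolding edges_def by blast

lemma doubleton_in_edges_iff:
  "x \<noteq> y \<Longrightarrow> {x, y} \<in> edges V w \<longleftrightarrow> x \<in> V \<and> y \<in> V \<and> 0 < w {x, y}"
  unfolding edges_def by (auto simp: doubleton_eq_iff)

lemma finite_edges: "finite V \<Longrightarrow> finite (edges V w)"
  by (rule finite_subset[where B = "(\<lambda>(x, y). {x, y}) ` (V \<times> V)"]) (auto simp: edges_def)

lemma delta_subset_edges: "delta V w X \<subseteq> edges V w"
  unfolding delta_def by blast

lemma doubleton_in_delta_iff:
  assumes "x \<noteq> y"
  shows "{x, y} \<in> delta V w X \<longleftrightarrow> {x, y} \<in> edges V w \<and> (x \<in> X \<longleftrightarrow> y \<notin> X)"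
proof -
  have "card ({x, y} \<inter> X) = 1 \<longleftrightarrow> (x \<in> X \<longleftrightarrow> y \<notin> X)"
    using assms by (cases "x \<in> X"; cases "y \<in> X") (auto simp: Int_insert_left)
  then show ?thesis unfolding delta_def by blast
qed

lemma delta_Diff:
  assumes "X \<subseteq> V" shows "delta V w (V - X) = delta V w X"
proof (rule set_eqI)
  fix e
  show "e \<in> delta V w (V - X) \<longleftrightarrow> e \<in> delta V w X"
  proof (cases "e \<in> edges V w")
    case True
    then obtain x y where "x \<in> V" "y \<in> V" "x \<noteq> y" "e = {x, y}" by (rule edgesE)
    then show ?thesis using True assms by (auto simp: doubleton_in_delta_iff)
  next
    case False
    then show ?thesis using delta_subset_edges by blast
  qed
qed

lemma cut_weight_delta:
  assumes wg: "weighted_graph V w" and XV: "X \<subseteq> V"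
  shows "cut_weight w (delta V w X) = (\<Sum>x\<in>X. \<Sum>y\<in>V - X. w {x, y})"
proof -
  define P where "P = {p \<in> X \<times> (V - X). 0 < w {fst p, snd p}}"
  have "(\<Sum>x\<in>X. \<Sum>y\<in>V - X. w {x, y}) = (\<Sum>p\<in>X \<times> (V - X). w {fst p, snd p})"
    by (simp add: sum.cartesian_product case_prod_beta)
  also have "\<dots> = (\<Sum>p\<in>P. w {fst p, snd p})"
  proof (rule sum.mono_neutral_right)
    show "finite (X \<times> (V - X))"
      using weighted_graph_finite[OF wg] XV by (blast intro: finite_subset)
    show "\<forall>p\<in>X \<times> (V - X) - P. w {fst p, snd p} = 0"
      using XV weighted_graph_nonneg[OF wg] by (force simp: P_def)
  qed (auto simp: P_def)
  also have "\<dots> = (\<Sum>e\<in>(\<lambda>p. {fst p, snd p}) ` P. w e)"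
    by (rule sum.reindex[symmetric, unfolded comp_def])
      (auto simp: inj_on_def P_def doubleton_eq_iff)
  also have "(\<lambda>p. {fst p, snd p}) ` P = delta V w X"
  proof (rule set_eqI)
    fix e
    show "e \<in> (\<lambda>p. {fst p, snd p}) ` P \<longleftrightarrow> e \<in> delta V w X"
    proof
      assume "e \<in> (\<lambda>p. {fst p, snd p}) ` P"
      then obtain x y where "x \<in> X" "y \<in> V - X" "0 < w {x, y}" "e = {x, y}"
        unfolding P_def by auto
      moreover from this have "x \<noteq> y" by blast
      ultimately show "e \<in> delta V w X"
        using XV by (auto simp: doubleton_in_delta_iff doubleton_in_edges_iff)
    next
      assume e: "e \<in> delta V w X"
      then obtain x y where xy: "x \<in> V" "y \<in> V" "x \<noteq> y" "e = {x, y}" "0 < w e"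
        using delta_subset_edges by (blast elim: edgesE)
      then have "x \<in> X \<longleftrightarrow> y \<notin> X" using e doubleton_in_delta_iff by metis
      then have "(x, y) \<in> P \<or> (y, x) \<in> P"
        using xy by (auto simp: P_def insert_commute)
      then show "e \<in> (\<lambda>p. {fst p, snd p}) ` P"
        using xy by (force simp: insert_commute)
    qed
  qed
  finally show ?thesis unfolding cut_weight_def by simp
qed

lemma cut_weight_nonneg: "0 \<le> cut_weight w (delta V w X)"
  unfolding cut_weight_def
  by (rule sum_nonneg) (use delta_subset_edges in \<open>fastforce elim: edgesE\<close>)

lemma delta_eq_empty_if_cut_weight_0:
  assumes "finite V" "cut_weight w (delta V w X) = 0"
  shows "delta V w X = {}"
proof (rule ccontr)
  assume "delta V w X \<noteq> {}"
  moreover have "finite (delta V w X)"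
    using finite_edges[OF assms(1)] delta_subset_edges by (rule finite_subset[rotated])
  moreover have "\<forall>e\<in>delta V w X. 0 < w e"
    using delta_subset_edges by (blast elim: edgesE)
  ultimately have "0 < cut_weight w (delta V w X)"
    unfolding cut_weight_def by (intro sum_pos) auto
  with assms(2) show False by simp
qed

lemma cut_weight_delta_Un:
  assumes wg: "weighted_graph V w" and AB: "A \<inter> B = {}" "A \<union> B \<subseteq> V"
    and no_edge: "\<And>x z. x \<in> A \<Longrightarrow> z \<in> B \<Longrightarrow> w {x, z} = 0"
  shows "cut_weight w (delta V w (A \<union> B))
    = cut_weight w (delta V w A) + cut_weight w (delta V w B)"
proof -
  let ?R = "V - (A \<union> B)"
  have fin: "finite A" "finite B" "finite ?R"
    using weighted_graph_finite[OF wg] AB(2) by (auto intro: finite_subset)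
  have split: "(\<Sum>z\<in>V - C. w {x, z}) = (\<Sum>z\<in>?R. w {x, z}) + (\<Sum>z\<in>D. w {x, z})"
    if "C \<union> D = A \<union> B" "C \<inter> D = {}" "finite D" for C D and x
  proof -
    have "V - C = ?R \<union> D" "?R \<inter> D = {}" using that AB by blast+
    then show ?thesis using fin(3) that(3) by (simp add: sum.union_disjoint)
  qed
  have "cut_weight w (delta V w (A \<union> B)) = (\<Sum>x\<in>A \<union> B. \<Sum>z\<in>?R. w {x, z})"
    using cut_weight_delta[OF wg AB(2)] .
  also have "\<dots> = (\<Sum>x\<in>A. \<Sum>z\<in>?R. w {x, z}) + (\<Sum>x\<in>B. \<Sum>z\<in>?R. w {x, z})"
    by (rule sum.union_disjoint[OF fin(1,2) AB(1)])
  also have "(\<Sum>x\<in>A. \<Sum>z\<in>?R. w {x, z}) = (\<Sum>x\<in>A. \<Sum>z\<in>V - A. w {x, z})"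
  proof (rule sum.cong[OF refl])
    fix x assume "x \<in> A"
    then have "(\<Sum>z\<in>B. w {x, z}) = 0" using no_edge by (simp add: sum.neutral)
    then show "(\<Sum>z\<in>?R. w {x, z}) = (\<Sum>z\<in>V - A. w {x, z})"
      using split[of A B] fin(2) AB(1) by simp
  qed
  also have "(\<Sum>x\<in>B. \<Sum>z\<in>?R. w {x, z}) = (\<Sum>x\<in>B. \<Sum>z\<in>V - B. w {x, z})"
  proof (rule sum.cong[OF refl])
    fix x assume "x \<in> B"
    then have "(\<Sum>z\<in>A. w {x, z}) = 0" using no_edge by (simp add: sum.neutral insert_commute)
    then show "(\<Sum>z\<in>?R. w {x, z}) = (\<Sum>z\<in>V - B. w {x, z})"
      using split[of B A] fin(1) AB(1) by (simp add: Un_commute Int_commute)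
  qed
  finally show ?thesis
    using cut_weight_delta[OF wg] AB(2) by simp
qed

section \<open>Dimension of spans of real-valued functions\<close>

abbreviation scale_fun :: "real \<Rightarrow> ('a \<Rightarrow> real) \<Rightarrow> 'a \<Rightarrow> real" where
  "scale_fun \<equiv> \<lambda>c f x. c * f x"

lemma vector_space_scale_fun: "vector_space scale_fun"
  unfolding vector_space_def by (simp add: fun_eq_iff algebra_simps)

lemma linear_restrict_comp:
  "Vector_Spaces.linear scale_fun scale_fun (\<lambda>g e. if e \<in> D then g (h e) else 0)"
  unfolding Vector_Spaces.linear_def module_hom_def module_hom_axioms_def
  using vector_space_scale_fun[where 'a='a] vector_space_scale_fun[where 'a='b]
  unfolding module_iff_vector_space by (simp add: fun_eq_iff)

lemma dimspan_linear_image_le: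
  fixes L :: "('a \<Rightarrow> real) \<Rightarrow> 'b \<Rightarrow> real"
  assumes fin: "finite S" and lin: "Vector_Spaces.linear scale_fun scale_fun L"
  shows "dimspan (L ` S) \<le> dimspan S"
proof -
  interpret v1: vector_space "scale_fun :: real \<Rightarrow> ('a \<Rightarrow> real) \<Rightarrow> 'a \<Rightarrow> real"
    by (rule vector_space_scale_fun)
  interpret v2: vector_space "scale_fun :: real \<Rightarrow> ('b \<Rightarrow> real) \<Rightarrow> 'b \<Rightarrow> real"
    by (rule vector_space_scale_fun)
  obtain B where B: "B \<subseteq> S" "v1.independent B" "S \<subseteq> v1.span B" "card B = v1.dim S"
    by (rule v1.basis_exists)
  have "finite B" using B(1) fin by (rule finite_subset)
  have "L ` v1.span B = v2.span (L ` B)"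
    using module_hom.span_image lin unfolding linear_iff_module_hom by blast
  then have "L ` S \<subseteq> v2.span (L ` B)"
    using B(3) by blast
  then have "v2.dim (L ` S) \<le> card (L ` B)"
    using \<open>finite B\<close> by (simp add: v2.dim_le_card)
  also have "\<dots> \<le> card B" using \<open>finite B\<close> by (rule card_image_le)
  finally show ?thesis unfolding dimspan_def using B(4) by simp
qed

lemma dimspan_image_eq_if_linear_maps:
  fixes f :: "'i \<Rightarrow> 'a \<Rightarrow> real" and g :: "'i \<Rightarrow> 'b \<Rightarrow> real"
  assumes fin: "finite I"
    and P: "Vector_Spaces.linear scale_fun scale_fun P" "\<And>i. i \<in> I \<Longrightarrow> P (f i) = g i"
    and Q: "Vector_Spaces.linear scale_fun scale_fun Q" "\<And>i. i \<in> I \<Longrightarrow> Q (g i) = f i"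
  shows "dimspan (f ` I) = dimspan (g ` I)"
proof (rule antisym)
  have "Q ` g ` I = f ` I" unfolding image_image by (rule image_cong[OF refl]) (rule Q(2))
  moreover have "dimspan (Q ` g ` I) \<le> dimspan (g ` I)"
    by (rule dimspan_linear_image_le[OF finite_imageI[OF fin] Q(1)])
  ultimately show "dimspan (f ` I) \<le> dimspan (g ` I)" by simp
  have "P ` f ` I = g ` I" unfolding image_image by (rule image_cong[OF refl]) (rule P(2))
  moreover have "dimspan (P ` f ` I) \<le> dimspan (f ` I)"
    by (rule dimspan_linear_image_le[OF finite_imageI[OF fin] P(1)])
  ultimately show "dimspan (g ` I) \<le> dimspan (f ` I)" by simp
qed

section \<open>Mincuts on one side of a crossless mincut\<close>

lemma mincut_iff_cut_weight_le:
  assumes mc: "delta V w X \<in> mincuts V w" and Y: "is_shore V Y"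
  shows "delta V w Y \<in> mincuts V w \<longleftrightarrow> cut_weight w (delta V w Y) \<le> cut_weight w (delta V w X)"
proof
  assume "delta V w Y \<in> mincuts V w"
  then show "cut_weight w (delta V w Y) \<le> cut_weight w (delta V w X)"
    using mc unfolding mincuts_def by blast
next
  assume le: "cut_weight w (delta V w Y) \<le> cut_weight w (delta V w X)"
  have "\<forall>T\<in>cuts V w. cut_weight w (delta V w X) \<le> cut_weight w T"
    using mc unfolding mincuts_def by blast
  with le have "\<forall>T\<in>cuts V w. cut_weight w (delta V w Y) \<le> cut_weight w T"
    by fastforce
  moreover have "delta V w Y \<in> cuts V w" using Y unfolding cuts_def by blast
  ultimately show "delta V w Y \<in> mincuts V w" unfolding mincuts_def by blast
qed

lemma crosses_Diff_iff:
  assumes "X \<subseteq> V" "Y \<subseteq> V"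
  shows "crosses V (V - X) Y \<longleftrightarrow> crosses V X Y"
proof -
  have "(V - X) \<inter> Y = Y - X" "(V - X) - Y = V - (X \<union> Y)"
    "Y - (V - X) = X \<inter> Y" "V - ((V - X) \<union> Y) = X - Y"
    using assms by blast+
  then show ?thesis unfolding crosses_def by (simp only: conj_ac)
qed

lemma crossless_Diff:
  assumes X: "X \<subseteq> V" and cl: "crossless V w X"
  shows "crossless V w (V - X)"
  unfolding crossless_def
proof (intro allI impI)
  fix Y assume Y: "is_shore V Y \<and> delta V w Y \<in> mincuts V w \<and> delta V w Y \<noteq> delta V w (V - X)"
  then have "\<not> crosses V X Y"
    using cl delta_Diff[OF X] unfolding crossless_def by auto
  moreover have "Y \<subseteq> V" using Y unfolding is_shore_def by blast
  ultimately show "\<not> crosses V (V - X) Y" using crosses_Diff_iff[OF X] by blast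
qed

definition mincut_shores_in :: "'v set \<Rightarrow> ('v set \<Rightarrow> real) \<Rightarrow> 'v set \<Rightarrow> 'v set set" where
  "mincut_shores_in V w X = {Y. Y \<noteq> {} \<and> Y \<subseteq> X \<and> delta V w Y \<in> mincuts V w}"

lemma delta_subset_side_edges:
  assumes "Y \<subseteq> X"
  shows "delta V w Y \<subseteq> delta V w X \<union> inner_edges V w X"
proof
  fix e assume e: "e \<in> delta V w Y"
  then have "e \<in> edges V w" using delta_subset_edges by blast
  then obtain x y where "x \<noteq> y" "e = {x, y}" by (rule edgesE)
  with e \<open>e \<in> edges V w\<close> assms show "e \<in> delta V w X \<union> inner_edges V w X"
    by (auto simp: doubleton_in_delta_iff inner_edges_def)
qed

lemma mincut_opposite_shore_eq:
  assumes wg: "weighted_graph V w" and X: "is_shore V X" and mc: "delta V w X \<in> mincuts V w"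
    and W: "W \<noteq> {}" "W \<subseteq> V - X" and Wmc: "delta V w W \<in> mincuts V w"
    and sub: "delta V w W \<subseteq> delta V w X \<union> inner_edges V w X"
  shows "delta V w W = delta V w X"
proof (cases "W = V - X")
  case True
  then show ?thesis using X delta_Diff unfolding is_shore_def by blast
next
  case False
  define U where "U = V - X - W"
  have shores: "is_shore V W" "is_shore V U"
    using X W False unfolding is_shore_def U_def by auto
  have no_edge: "w {x, z} = 0" if "x \<in> W" "z \<in> U" for x z
  proof -
    have xz: "x \<noteq> z" "x \<in> V" "z \<in> V" "x \<notin> X" "z \<notin> X" "z \<notin> W"
      using that W unfolding U_def by auto
    then have "{x, z} \<notin> delta V w X \<union> inner_edges V w X"
      by (simp add: doubleton_in_delta_iff inner_edges_def)
    with sub have "{x, z} \<notin> delta V w W" by blast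
    then have "{x, z} \<notin> edges V w"
      using xz \<open>x \<in> W\<close> doubleton_in_delta_iff by metis
    then have "\<not> 0 < w {x, z}"
      using xz doubleton_in_edges_iff by metis
    then show ?thesis using weighted_graph_nonneg[OF wg] xz by force
  qed
  have WU: "W \<inter> U = {}" "W \<union> U = V - X" using W unfolding U_def by auto
  have "cut_weight w (delta V w (W \<union> U))
      = cut_weight w (delta V w W) + cut_weight w (delta V w U)"
    using cut_weight_delta_Un[OF wg WU(1) _ no_edge] WU(2) by blast
  then have "cut_weight w (delta V w X)
      = cut_weight w (delta V w W) + cut_weight w (delta V w U)"
    using WU(2) delta_Diff X unfolding is_shore_def by (metis psubsetE)
  moreover have "cut_weight w (delta V w W) \<le> cut_weight w (delta V w X)"
    using mincut_iff_cut_weight_le[OF mc shores(1)] Wmc by blast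
  moreover have "cut_weight w (delta V w X) \<le> cut_weight w (delta V w W)"
    "cut_weight w (delta V w X) \<le> cut_weight w (delta V w U)"
    using mc shores unfolding mincuts_def cuts_def by blast+
  ultimately have "cut_weight w (delta V w W) = 0" "cut_weight w (delta V w X) = 0"
    using cut_weight_nonneg[of w V W] by linarith+
  then show ?thesis
    using delta_eq_empty_if_cut_weight_0 weighted_graph_finite[OF wg] by metis
qed

lemma mincuts_within_side:
  assumes wg: "weighted_graph V w" and X: "is_shore V X" and mc: "delta V w X \<in> mincuts V w"
    and cl: "crossless V w X"
  shows "{S \<in> mincuts V w. S \<subseteq> delta V w X \<union> inner_edges V w X}
    = delta V w ` mincut_shores_in V w X"
proof (intro set_eqI iffI)
  fix S assume "S \<in> {S \<in> mincuts V w. S \<subseteq> delta V w X \<union> inner_edges V w X}"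
  then have S: "S \<in> mincuts V w" "S \<subseteq> delta V w X \<union> inner_edges V w X" by auto
  then obtain Y where Y: "is_shore V Y" "S = delta V w Y" unfolding mincuts_def cuts_def by blast
  have Yc: "V - Y \<noteq> {}" "Y \<subseteq> V" "delta V w (V - Y) = S"
    using Y delta_Diff unfolding is_shore_def by auto
  have X_in: "X \<in> mincut_shores_in V w X" using X mc unfolding is_shore_def mincut_shores_in_def by auto
  show "S \<in> delta V w ` mincut_shores_in V w X"
  proof (cases "S = delta V w X")
    case True
    with X_in show ?thesis by blast
  next
    case False
    then have "\<not> crosses V X Y" using cl Y S(1) unfolding crossless_def by blast
    then consider "Y \<subseteq> V - X" | "V - Y \<subseteq> V - X" | "Y \<subseteq> X" | "V - Y \<subseteq> X"
      using Yc(2) unfolding crosses_def by blast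
    then show ?thesis
    proof cases
      case 1
      then have "S = delta V w X"
        using mincut_opposite_shore_eq[OF wg X mc _ 1] Y S unfolding is_shore_def by blast
      with False show ?thesis by blast
    next
      case 2
      then have "S = delta V w X"
        using mincut_opposite_shore_eq[OF wg X mc Yc(1) 2] Yc(3) S by simp
      with False show ?thesis by blast
    next
      case 3
      then have "Y \<in> mincut_shores_in V w X"
        using Y S(1) unfolding is_shore_def mincut_shores_in_def by blast
      with Y(2) show ?thesis by blast
    next
      case 4
      then have "V - Y \<in> mincut_shores_in V w X"
        using Yc S(1) unfolding mincut_shores_in_def by auto
      with Yc(3) show ?thesis by blast
    qed
  qed
next
  fix S assume "S \<in> delta V w ` mincut_shores_in V w X"
  then show "S \<in> {S \<in> mincuts V w. S \<subseteq> delta V w X \<union> inner_edges V w X}"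
    using delta_subset_side_edges unfolding mincut_shores_in_def by blast
qed

section \<open>The separated graph\<close>

lemma sep_w_Some_Some: "sep_w X' w {Some x, Some y} = w {x, y}"
proof -
  have "Some -` {Some x, Some y} = {x, y}" by auto
  then show ?thesis unfolding sep_w_def by simp
qed

lemma sep_w_Some_None: "sep_w X' w {Some x, None} = (\<Sum>y\<in>X'. w {x, y})"
proof -
  have "Some -` {Some x, None} = {x}" by auto
  then show ?thesis unfolding sep_w_def by (simp add: insert_commute)
qed

lemma sep_V_cases:
  assumes "a \<in> sep_V X"
  obtains "a = None" | x where "x \<in> X" "a = Some x"
  using assms unfolding sep_V_def by blast

lemma weighted_graph_sep:
  assumes wg: "weighted_graph V w" and XV: "X \<subseteq> V"
  shows "weighted_graph (sep_V X) (sep_w (V - X) w)"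
  unfolding weighted_graph_def
proof (intro conjI ballI impI)
  show "finite (sep_V X)"
    using weighted_graph_finite[OF wg] XV unfolding sep_V_def by (auto intro: finite_subset)
  have nonneg: "0 \<le> w {x, y}" if "x \<in> X" "y \<in> V" "x \<noteq> y" for x y
    using weighted_graph_nonneg[OF wg] that XV by blast
  have nonneg_sum: "0 \<le> sep_w (V - X) w {None, Some x}" if "x \<in> X" for x
    unfolding insert_commute[of None] sep_w_Some_None using nonneg that by (intro sum_nonneg) auto
  fix a b assume a: "a \<in> sep_V X" and b: "b \<in> sep_V X" and "a \<noteq> b"
  then show "0 \<le> sep_w (V - X) w {a, b}"
    by (cases rule: sep_V_cases[OF a]; cases rule: sep_V_cases[OF b])
      (auto simp: insert_commute sep_w_Some_Some intro: nonneg_sum nonneg dest: subsetD[OF XV])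
qed

lemma cut_weight_sep_delta:
  assumes wg: "weighted_graph V w" and XV: "X \<subseteq> V" and Y: "Y \<subseteq> X"
  shows "cut_weight (sep_w (V - X) w) (delta (sep_V X) (sep_w (V - X) w) (Some ` Y))
    = cut_weight w (delta V w Y)"
proof -
  let ?w = "sep_w (V - X) w"
  have fin: "finite (V - X)" "finite (X - Y)"
    using weighted_graph_finite[OF wg] XV by (auto intro: finite_subset)
  have "cut_weight ?w (delta (sep_V X) ?w (Some ` Y))
      = (\<Sum>a\<in>Some ` Y. \<Sum>b\<in>sep_V X - Some ` Y. ?w {a, b})"
    using cut_weight_delta[OF weighted_graph_sep[OF wg XV]] Y unfolding sep_V_def by blast
  also have "\<dots> = (\<Sum>x\<in>Y. \<Sum>z\<in>V - Y. w {x, z})"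
  proof (subst sum.reindex, simp, rule sum.cong[OF refl], unfold comp_def)
    fix x assume "x \<in> Y"
    have "sep_V X - Some ` Y = insert None (Some ` (X - Y))" unfolding sep_V_def by auto
    then have "(\<Sum>b\<in>sep_V X - Some ` Y. ?w {Some x, b})
        = (\<Sum>y\<in>V - X. w {x, y}) + (\<Sum>z\<in>X - Y. w {x, z})"
      using fin(2) by (simp add: sum.reindex sep_w_Some_None sep_w_Some_Some)
    also have "\<dots> = (\<Sum>z\<in>V - Y. w {x, z})"
      using fin Y XV by (subst sum.union_disjoint[symmetric]) (auto intro: sum.cong)
    finally show "(\<Sum>b\<in>sep_V X - Some ` Y. ?w {Some x, b}) = (\<Sum>z\<in>V - Y. w {x, z})" .
  qed
  also have "\<dots> = cut_weight w (delta V w Y)"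
    using cut_weight_delta[OF wg] Y XV by auto
  finally show ?thesis .
qed

lemma is_shore_sep_Some: "Y \<noteq> {} \<Longrightarrow> Y \<subseteq> X \<Longrightarrow> is_shore (sep_V X) (Some ` Y)"
  unfolding is_shore_def sep_V_def by auto

lemma sep_shoreE:
  assumes "is_shore (sep_V X) Y'"
  obtains Y where "Y \<noteq> {}" "Y \<subseteq> X" "delta (sep_V X) w' Y' = delta (sep_V X) w' (Some ` Y)"
proof (cases "None \<in> Y'")
  case False
  then have Y': "Y' = Some ` (Some -` Y')" by (auto simp: image_iff) (metis not_None_eq)
  moreover have "Some -` Y' \<noteq> {}"
    using Y' assms unfolding is_shore_def by (metis image_empty)
  moreover have "Some -` Y' \<subseteq> X"
    using assms unfolding is_shore_def sep_V_def by auto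
  ultimately show ?thesis using that[of "Some -` Y'"] by metis
next
  case True
  then have "sep_V X - Y' = Some ` (X - Some -` Y')" unfolding sep_V_def by auto
  moreover have "delta (sep_V X) w' (sep_V X - Y') = delta (sep_V X) w' Y'"
    using delta_Diff assms unfolding is_shore_def by blast
  moreover have "X - Some -` Y' \<noteq> {}"
    using assms True unfolding is_shore_def sep_V_def by auto
  ultimately show ?thesis using that[of "X - Some -` Y'"] by auto
qed

lemma cuts_sep:
  "cuts (sep_V X) w' = (\<lambda>Y. delta (sep_V X) w' (Some ` Y)) ` {Y. Y \<noteq> {} \<and> Y \<subseteq> X}"
  unfolding cuts_def by (auto intro: is_shore_sep_Some elim!: sep_shoreE)

lemma sep_mincut_iff:
  assumes wg: "weighted_graph V w" and X: "is_shore V X" and mc: "delta V w X \<in> mincuts V w"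
    and Y: "Y \<noteq> {}" "Y \<subseteq> X"
  shows "delta (sep_V X) (sep_w (V - X) w) (Some ` Y) \<in> mincuts (sep_V X) (sep_w (V - X) w)
    \<longleftrightarrow> delta V w Y \<in> mincuts V w"
proof -
  have XV: "X \<subseteq> V" using X unfolding is_shore_def by blast
  have shore: "is_shore V Z" if "Z \<noteq> {}" "Z \<subseteq> X" for Z
    using that X unfolding is_shore_def by blast
  have "delta (sep_V X) (sep_w (V - X) w) (Some ` Y) \<in> mincuts (sep_V X) (sep_w (V - X) w)
      \<longleftrightarrow> (\<forall>Z. Z \<noteq> {} \<and> Z \<subseteq> X \<longrightarrow> cut_weight w (delta V w Y) \<le> cut_weight w (delta V w Z))"
    unfolding mincuts_def cuts_sep using Y cut_weight_sep_delta[OF wg XV] by auto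
  also have "\<dots> \<longleftrightarrow> cut_weight w (delta V w Y) \<le> cut_weight w (delta V w X)"
    using X mc shore unfolding is_shore_def mincuts_def cuts_def by (blast intro: order_trans)
  also have "\<dots> \<longleftrightarrow> delta V w Y \<in> mincuts V w"
    using mincut_iff_cut_weight_le[OF mc shore[OF Y]] by blast
  finally show ?thesis .
qed

lemma mincuts_sep:
  assumes wg: "weighted_graph V w" and X: "is_shore V X" and mc: "delta V w X \<in> mincuts V w"
  shows "mincuts (sep_V X) (sep_w (V - X) w)
    = (\<lambda>Y. delta (sep_V X) (sep_w (V - X) w) (Some ` Y)) ` mincut_shores_in V w X"
proof -
  have "mincuts (sep_V X) (sep_w (V - X) w) \<subseteq> cuts (sep_V X) (sep_w (V - X) w)"
    unfolding mincuts_def by blast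
  then show ?thesis
    unfolding cuts_sep mincut_shores_in_def using sep_mincut_iff[OF wg X mc] by blast
qed

definition sep_lift :: "'v set \<Rightarrow> 'v set \<Rightarrow> 'v option set" where
  "sep_lift X e = (if e \<subseteq> X then Some ` e else insert None (Some ` (e \<inter> X)))"

(* An edge {x, v} at the new vertex v is sent back to some edge of G from x across the cut.
   The choice is irrelevant: a cut whose shore lies inside X contains either all such edges
   at x or none of them. *)
definition sep_lower :: "'v set \<Rightarrow> ('v set \<Rightarrow> real) \<Rightarrow> 'v set \<Rightarrow> 'v option set \<Rightarrow> 'v set" where
  "sep_lower V w X e' =
    (if None \<in> e'
     then {the_elem (Some -` e'), SOME y. y \<in> V - X \<and> 0 < w {the_elem (Some -` e'), y}}
     else Some -` e')"

lemma side_edgeE: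
  assumes "e \<in> delta V w X \<union> inner_edges V w X"
  obtains a b where "a \<in> X" "a \<in> V" "b \<in> V" "a \<noteq> b" "e = {a, b}" "0 < w {a, b}"
proof -
  have "e \<in> edges V w" using assms delta_subset_edges unfolding inner_edges_def by blast
  then obtain x y where xy: "x \<in> V" "y \<in> V" "x \<noteq> y" "e = {x, y}" "0 < w e" by (rule edgesE)
  then have "x \<in> X \<or> y \<in> X"
    using assms by (auto simp: doubleton_in_delta_iff inner_edges_def)
  then show ?thesis
    using that[of x y] that[of y x] xy by (auto simp: insert_commute)
qed

lemma sep_edgeE:
  assumes "e' \<in> edges (sep_V X) (sep_w (V - X) w)"
  obtains (inner) x z where "x \<in> X" "z \<in> X" "x \<noteq> z" "e' = {Some x, Some z}" "0 < w {x, z}"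
    | (cross) x where "x \<in> X" "e' = {Some x, None}" "0 < (\<Sum>y\<in>V - X. w {x, y})"
proof -
  obtain a b where ab: "a \<in> sep_V X" "b \<in> sep_V X" "a \<noteq> b" "e' = {a, b}"
    "0 < sep_w (V - X) w e'"
    using assms by (rule edgesE)
  have cross_edge: thesis if "x \<in> X" "e' = {Some x, None}" for x
    using cross[OF that] ab(5) that(2) by (simp add: sep_w_Some_None)
  show ?thesis
  proof (cases rule: sep_V_cases[OF ab(1)]; cases rule: sep_V_cases[OF ab(2)])
    fix x z assume "x \<in> X" "a = Some x" "z \<in> X" "b = Some z"
    then show ?thesis using inner[of x z] ab by (simp add: sep_w_Some_Some)
  qed (use ab cross_edge in \<open>auto simp: insert_commute\<close>)
qed

lemma sep_lift_in_sep_delta_iff: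
  assumes wg: "weighted_graph V w" and Y: "Y \<subseteq> X"
    and e: "e \<in> delta V w X \<union> inner_edges V w X"
  shows "sep_lift X e \<in> delta (sep_V X) (sep_w (V - X) w) (Some ` Y) \<longleftrightarrow> e \<in> delta V w Y"
proof -
  obtain a b where ab: "a \<in> X" "a \<in> V" "b \<in> V" "a \<noteq> b" "e = {a, b}" "0 < w {a, b}"
    using e by (rule side_edgeE)
  then have e_edge: "e \<in> edges V w" using ab by (simp add: doubleton_in_edges_iff)
  show ?thesis
  proof (cases "b \<in> X")
    case True
    then have "sep_lift X e = {Some a, Some b}" using ab unfolding sep_lift_def by auto
    moreover have "{Some a, Some b} \<in> edges (sep_V X) (sep_w (V - X) w)"
      using ab True by (simp add: doubleton_in_edges_iff sep_w_Some_Some sep_V_def)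
    ultimately show ?thesis
      using ab e_edge by (auto simp: doubleton_in_delta_iff inj_image_mem_iff)
  next
    case False
    then have "sep_lift X e = {Some a, None}" using ab unfolding sep_lift_def by auto
    moreover have "w {a, b} \<le> (\<Sum>z\<in>V - X. w {a, z})"
      using False ab weighted_graph_finite[OF wg] weighted_graph_nonneg[OF wg]
      by (intro member_le_sum) auto
    then have "{Some a, None} \<in> edges (sep_V X) (sep_w (V - X) w)"
      using ab by (simp add: doubleton_in_edges_iff sep_w_Some_None sep_V_def)
    moreover have "b \<notin> Y" using False Y by blast
    ultimately show ?thesis
      using ab e_edge by (auto simp: doubleton_in_delta_iff)
  qed
qed

lemma sep_lower_in_delta_iff:
  assumes wg: "weighted_graph V w" and XV: "X \<subseteq> V" and Y: "Y \<subseteq> X"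
    and e': "e' \<in> edges (sep_V X) (sep_w (V - X) w)"
  shows "sep_lower V w X e' \<in> delta V w Y \<longleftrightarrow> e' \<in> delta (sep_V X) (sep_w (V - X) w) (Some ` Y)"
  using e'
proof (cases rule: sep_edgeE)
  case (inner x z)
  then have "sep_lower V w X e' = {x, z}" unfolding sep_lower_def by auto
  moreover have "{x, z} \<in> edges V w" using inner XV by (auto simp: doubleton_in_edges_iff)
  ultimately show ?thesis
    using inner e' by (auto simp: doubleton_in_delta_iff inj_image_mem_iff)
next
  case (cross x)
  have "\<exists>y. y \<in> V - X \<and> 0 < w {x, y}"
  proof (rule ccontr)
    assume "\<not> (\<exists>y. y \<in> V - X \<and> 0 < w {x, y})"
    then have "(\<Sum>y\<in>V - X. w {x, y}) \<le> 0" by (intro sum_nonpos) auto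
    with cross(3) show False by linarith
  qed
  then have "y \<in> V - X \<and> 0 < w {x, y}" if "y = (SOME y. y \<in> V - X \<and> 0 < w {x, y})" for y
    unfolding that by (rule someI_ex)
  moreover have "Some -` e' = {x}" using cross(2) by auto
  ultimately obtain y where y: "y \<in> V - X" "0 < w {x, y}" "sep_lower V w X e' = {x, y}"
    using cross(2) unfolding sep_lower_def by auto
  moreover have "x \<noteq> y" using cross(1) y(1) by blast
  ultimately have "{x, y} \<in> edges V w"
    using cross(1) XV by (auto simp: doubleton_in_edges_iff)
  with \<open>x \<noteq> y\<close> show ?thesis
    using cross y Y e' by (auto simp: doubleton_in_delta_iff)
qed

lemma chi_delta_via_sep_lift:
  assumes wg: "weighted_graph V w" and Y: "Y \<subseteq> X"
  shows "(\<lambda>e. if e \<in> delta V w X \<union> inner_edges V w X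
              then chi (delta (sep_V X) (sep_w (V - X) w) (Some ` Y)) (sep_lift X e) else 0)
    = chi (delta V w Y)"
  using sep_lift_in_sep_delta_iff[OF wg Y] delta_subset_side_edges[OF Y]
  unfolding chi_def by fastforce

lemma chi_sep_delta_via_sep_lower:
  assumes wg: "weighted_graph V w" and XV: "X \<subseteq> V" and Y: "Y \<subseteq> X"
  shows "(\<lambda>e'. if e' \<in> edges (sep_V X) (sep_w (V - X) w)
               then chi (delta V w Y) (sep_lower V w X e') else 0)
    = chi (delta (sep_V X) (sep_w (V - X) w) (Some ` Y))"
  using sep_lower_in_delta_iff[OF wg XV Y] delta_subset_edges
  unfolding chi_def by fastforce

lemma dimspan_side_mincuts_eq_cdim_sep:
  assumes wg: "weighted_graph V w" and X: "is_shore V X" and mc: "delta V w X \<in> mincuts V w"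
    and cl: "crossless V w X"
  shows "dimspan (chi ` {S \<in> mincuts V w. S \<subseteq> delta V w X \<union> inner_edges V w X})
    = cdim (sep_V X) (sep_w (V - X) w)"
proof -
  let ?\<Y> = "mincut_shores_in V w X"
  have XV: "X \<subseteq> V" using X unfolding is_shore_def by blast
  have Y: "Y \<subseteq> X" if "Y \<in> ?\<Y>" for Y using that unfolding mincut_shores_in_def by blast
  have "finite X" using weighted_graph_finite[OF wg] XV by (rule finite_subset[rotated])
  then have "finite ?\<Y>" using Y by (blast intro: finite_subset[of _ "Pow X"])
  then have "dimspan ((\<lambda>Y. chi (delta V w Y)) ` ?\<Y>)
      = dimspan ((\<lambda>Y. chi (delta (sep_V X) (sep_w (V - X) w) (Some ` Y))) ` ?\<Y>)"
  proof (rule dimspan_image_eq_if_linear_maps)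
    show "Vector_Spaces.linear scale_fun scale_fun
        (\<lambda>g e'. if e' \<in> edges (sep_V X) (sep_w (V - X) w) then g (sep_lower V w X e') else 0)"
      "Vector_Spaces.linear scale_fun scale_fun
        (\<lambda>g e. if e \<in> delta V w X \<union> inner_edges V w X then g (sep_lift X e) else 0)"
      by (rule linear_restrict_comp)+
  qed (use chi_sep_delta_via_sep_lower[OF wg XV Y] chi_delta_via_sep_lift[OF wg Y] in auto)
  then show ?thesis
    unfolding cdim_def mincuts_within_side[OF wg X mc cl] mincuts_sep[OF wg X mc] image_image .
qed

theorem lemma13:
  fixes V :: "'v set" and w :: "'v set \<Rightarrow> real" and X0 :: "'v set"
  assumes "weighted_graph V w"
    and "is_shore V X0"
    and "delta V w X0 \<in> mincuts V w"
    and "crossless V w X0"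
    and "nonstar V X0"
  shows "\<forall>Xb \<in> {X0, V - X0}.
           dimspan (chi ` {S \<in> mincuts V w. S \<subseteq> delta V w X0 \<union> inner_edges V w Xb})
             = cdim (sep_V Xb) (sep_w (V - Xb) w)"
proof -
  have X0V: "X0 \<subseteq> V" using assms(2) unfolding is_shore_def by blast
  have "is_shore V (V - X0)" using assms(2) unfolding is_shore_def by blast
  moreover have "delta V w (V - X0) = delta V w X0" using X0V by (rule delta_Diff)
  moreover have "crossless V w (V - X0)" using X0V assms(4) by (rule crossless_Diff)
  ultimately show ?thesis
    using dimspan_side_mincuts_eq_cdim_sep[OF assms(1)] assms(2-4) by force
qed

end
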